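(* Let $f:\{0,1\}^3\to\{0,1\}$ be $f(x_1,x_2,x_3)=x_1\wedge(x_2\vee x_3)$. Then $Q_E(f)=2$, while every parity decision tree computing $f$ has depth at least $3$.
   Context: Quantum query model: a $t$-query quantum query algorithm on inputs $x\in\{0,1\}^m$ acts on a Hilbert space $\mathcal H_{\rm in}\otimes\mathcal H_{\rm work}\otimes\mathcal H_{\rm out}$, where $\mathcal H_{\rm in}$ has orthonormal basis $|0\rangle,\dots,|m\rangle$, $\mathcal H_{\rm work}$ is a finite-dimensional workspace of arbitrary size, and $\mathcal H_{\rm out}$ is one qubit. It is specified by input-independent unitaries $U_0,\dots,U_t$, and on input $x$ produces the state $U_tO_xU_{t-1}O_x\cdots O_xU_0|0\rangle$ ($t$ applications of $O_x$), where the oracle $O_x$ acts on $\mathcal H_{\rm in}$ by $|i\rangle\mapsto(-1)^{x_i}|i\rangle$ with the convention $x_0=0$ (and as the identity on the other registers). The output is obtained by measuring $\mathcal H_{\rm out}$ in the computational basis. The algorithm computes $h$ exactly if for every $x$ the output equals $h(x)$ with probability $1$. $Q_E(h)$ is the minimum $t$ such that some $t$-query quantum query algorithm computes $h$ exactly. A parity decision tree is a rooted binary tree in which every internal vertex has exactly two children and each internal vertex $v$ is labelled by a subset $S_v$ of input positions, and each leaf is labelled $0$ or $1$. On input $x$, evaluation starts at the root; at internal vertex $v$ the parity $\bigoplus_{i\in S_v}x_i$ is computed, and the left subtree is evaluated if it is $0$ and the right subtree if it is $1$; the output is the label of the leaf reached. Its depth is the maximum length of a root-to-leaf path. *)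

theory Defs
  imports "Jordan_Normal_Form.Schur_Decomposition"
begin

text \<open>An input x in {0,1}^m is a function nat => bool, true = 1, supported on positions 1..m;
  in particular x 0 = False, matching the convention x_0 = 0.\<close>
definition inputs :: "nat \<Rightarrow> (nat \<Rightarrow> bool) set" where
  "inputs m = {x. \<forall>i. i \<notin> {1..m} \<longrightarrow> \<not> x i}"

text \<open>Hilbert space H_in (basis |0>,...,|m>) tensor H_work (dimension W >= 1) tensor H_out (one qubit),
  realised as C^D with D = (m+1)*W*2; the basis state |i>|w>|b> has index (i*W + w)*2 + b.\<close>
definition qdim :: "nat \<Rightarrow> nat \<Rightarrow> nat" where
  "qdim m W = (m + 1) * W * 2"

definition in_reg :: "nat \<Rightarrow> nat \<Rightarrow> nat" where
  "in_reg W k = k div (2 * W)"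

definition out_reg :: "nat \<Rightarrow> bool" where
  "out_reg k = (k mod 2 = 1)"

definition unitary_mat :: "nat \<Rightarrow> complex mat \<Rightarrow> bool" where
  "unitary_mat D U \<longleftrightarrow> U \<in> carrier_mat D D \<and> U * mat_adjoint U = 1\<^sub>m D"

definition query_op :: "nat \<Rightarrow> nat \<Rightarrow> (nat \<Rightarrow> bool) \<Rightarrow> complex mat" where
  "query_op m W x = mat (qdim m W) (qdim m W)
     (\<lambda>(k, l). if k = l then (if x (in_reg W k) then -1 else 1) else 0)"

text \<open>run [U_0, ..., U_t] O v = U_t O U_(t-1) ... O U_0 v.\<close>
fun run :: "complex mat list \<Rightarrow> complex mat \<Rightarrow> complex vec \<Rightarrow> complex vec" where
  "run [] Q v = v"
| "run [U] Q v = U *\<^sub>v v"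
| "run (U # V # Us) Q v = run (V # Us) Q (Q *\<^sub>v (U *\<^sub>v v))"

definition final_state :: "nat \<Rightarrow> nat \<Rightarrow> complex mat list \<Rightarrow> (nat \<Rightarrow> bool) \<Rightarrow> complex vec" where
  "final_state m W Us x = run Us (query_op m W x) (unit_vec (qdim m W) 0)"

definition prob_out :: "nat \<Rightarrow> nat \<Rightarrow> complex mat list \<Rightarrow> (nat \<Rightarrow> bool) \<Rightarrow> bool \<Rightarrow> real" where
  "prob_out m W Us x b = (\<Sum>k \<in> {k. k < qdim m W \<and> out_reg k = b}. (cmod (final_state m W Us x $ k))\<^sup>2)"

definition computes_exactly :: "nat \<Rightarrow> ((nat \<Rightarrow> bool) \<Rightarrow> bool) \<Rightarrow> nat \<Rightarrow> nat \<Rightarrow> complex mat list \<Rightarrow> bool" where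
  "computes_exactly m h t W Us \<longleftrightarrow>
     W \<ge> 1 \<and> length Us = t + 1 \<and> (\<forall>U \<in> set Us. unitary_mat (qdim m W) U) \<and>
     (\<forall>x \<in> inputs m. prob_out m W Us x (h x) = 1)"

definition QE :: "nat \<Rightarrow> ((nat \<Rightarrow> bool) \<Rightarrow> bool) \<Rightarrow> nat" where
  "QE m h = (LEAST t. \<exists>W Us. computes_exactly m h t W Us)"

datatype pdt = Leaf bool | Node "nat set" pdt pdt

fun pdt_wf :: "nat \<Rightarrow> pdt \<Rightarrow> bool" where
  "pdt_wf m (Leaf b) = True"
| "pdt_wf m (Node S l r) = (S \<subseteq> {1..m} \<and> pdt_wf m l \<and> pdt_wf m r)"

fun pdt_eval :: "pdt \<Rightarrow> (nat \<Rightarrow> bool) \<Rightarrow> bool" where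
  "pdt_eval (Leaf b) x = b"
| "pdt_eval (Node S l r) x = (if odd (card {i \<in> S. x i}) then pdt_eval r x else pdt_eval l x)"

fun pdt_depth :: "pdt \<Rightarrow> nat" where
  "pdt_depth (Leaf b) = 0"
| "pdt_depth (Node S l r) = Suc (max (pdt_depth l) (pdt_depth r))"

definition pdt_computes :: "nat \<Rightarrow> ((nat \<Rightarrow> bool) \<Rightarrow> bool) \<Rightarrow> pdt \<Rightarrow> bool" where
  "pdt_computes m h T \<longleftrightarrow> pdt_wf m T \<and> (\<forall>x \<in> inputs m. pdt_eval T x = h x)"

definition f_and_or :: "(nat \<Rightarrow> bool) \<Rightarrow> bool" where
  "f_and_or x = (x 1 \<and> (x 2 \<or> x 3))"

end

theory Submission
  imports Defs
begin

text \<open>Lower bound (polynomial method): after at most one query every amplitude is an affine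
  combination of the signs (-1)^x_i, so the acceptance probability is a polynomial of degree at
  most two in these signs and is orthogonal to the character (-1)^(x_1 + x_2 + x_3). For an exact
  algorithm the acceptance probability is f itself, whose correlation with that character is
  nonzero. Upper bound: an explicit two-query algorithm with one-dimensional workspace, composed
  of two-level real rotations and reflections, whose final state is computed on all eight inputs.
  Parity decision trees: a tree of depth two computes if p then p1 else p0 for affine parities
  p, p0, p1, a function of degree at most two over GF(2), whereas
  x1 (x2 or x3) = x1 x2 + x1 x3 + x1 x2 x3 has degree three.\<close>

definition vec_norm_sq :: "complex vec \<Rightarrow> real" where
  "vec_norm_sq v = (\<Sum>k<dim_vec v. (cmod (v $ k))\<^sup>2)"

lemma mult_mat_vec_index_sum:
  "U \<in> carrier_mat n n \<Longrightarrow> v \<in> carrier_vec n \<Longrightarrow> k < n \<Longrightarrow> (U *\<^sub>v v) $ k = (\<Sum>j<n. U $$ (k,j) * v $ j)"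
  by (simp add: scalar_prod_def atLeast0LessThan)

lemma mat_adjoint_carrier: "M \<in> carrier_mat n n \<Longrightarrow> mat_adjoint M \<in> carrier_mat n n"
  unfolding mat_adjoint_def by auto

lemma mat_adjoint_index:
  "M \<in> carrier_mat n n \<Longrightarrow> i < n \<Longrightarrow> j < n \<Longrightarrow> mat_adjoint M $$ (i,j) = cnj (M $$ (j,i))"
  unfolding mat_adjoint_def by (subst mat_of_rows_index) auto

lemma mat_adjoint_mult:
  fixes A B :: "complex mat"
  assumes A: "A \<in> carrier_mat n n" and B: "B \<in> carrier_mat n n"
  shows "mat_adjoint (A * B) = mat_adjoint B * mat_adjoint A"
proof (rule eq_matI)
  have AB: "A * B \<in> carrier_mat n n" using A B by simp
  fix i j assume "i < dim_row (mat_adjoint B * mat_adjoint A)" "j < dim_col (mat_adjoint B * mat_adjoint A)"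
  then have i: "i < n" and j: "j < n" using mat_adjoint_carrier[OF A] mat_adjoint_carrier[OF B] by auto
  have "mat_adjoint (A * B) $$ (i,j) = cnj (\<Sum>l = 0..<n. A $$ (j,l) * B $$ (l,i))"
    using mat_adjoint_index[OF AB i j] A B i j by (simp add: scalar_prod_def)
  also have "\<dots> = (\<Sum>l = 0..<n. mat_adjoint B $$ (i,l) * mat_adjoint A $$ (l,j))"
    by (simp add: cnj_sum mat_adjoint_index[OF A] mat_adjoint_index[OF B] i j mult.commute)
  also have "\<dots> = (mat_adjoint B * mat_adjoint A) $$ (i,j)"
    using mat_adjoint_carrier[OF A] mat_adjoint_carrier[OF B] i j by (simp add: scalar_prod_def)
  finally show "mat_adjoint (A * B) $$ (i,j) = (mat_adjoint B * mat_adjoint A) $$ (i,j)" .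
qed (use mat_adjoint_carrier[OF A] mat_adjoint_carrier[OF B] mat_adjoint_carrier[of "A * B" n] A B in auto)

lemma unitary_mat_carrier: "unitary_mat n U \<Longrightarrow> U \<in> carrier_mat n n"
  by (simp add: unitary_mat_def)

lemma unitary_mat_mult:
  assumes "unitary_mat n A" "unitary_mat n B"
  shows "unitary_mat n (A * B)"
proof -
  have A: "A \<in> carrier_mat n n" and B: "B \<in> carrier_mat n n"
    and a: "A * mat_adjoint A = 1\<^sub>m n" and b: "B * mat_adjoint B = 1\<^sub>m n"
    using assms unfolding unitary_mat_def by auto
  have "A * B * mat_adjoint (A * B) = A * (B * mat_adjoint B) * mat_adjoint A"
    using A B mat_adjoint_carrier[OF A] mat_adjoint_carrier[OF B]
    by (simp add: mat_adjoint_mult assoc_mult_mat[of _ n n _ n _ n])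
  also have "\<dots> = 1\<^sub>m n" using a b A by simp
  finally show ?thesis using A B unfolding unitary_mat_def by simp
qed

lemma unitary_mat_columns_orthonormal:
  assumes "unitary_mat n U" "l < n" "j < n"
  shows "(\<Sum>k<n. cnj (U $$ (k,l)) * U $$ (k,j)) = (if l = j then 1 else 0)"
proof -
  have U: "U \<in> carrier_mat n n" and UU: "U * mat_adjoint U = 1\<^sub>m n"
    using assms(1) unfolding unitary_mat_def by auto
  have "mat_adjoint U * U = 1\<^sub>m n"
    by (rule mat_mult_left_right_inverse[OF U mat_adjoint_carrier[OF U] UU])
  moreover have "(mat_adjoint U * U) $$ (l,j) = (\<Sum>k<n. cnj (U $$ (k,l)) * U $$ (k,j))"
    using assms(2,3) U mat_adjoint_carrier[OF U]
    by (simp add: scalar_prod_def atLeast0LessThan mat_adjoint_index[OF U])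
  ultimately show ?thesis using assms(2,3) by simp
qed

lemma unitary_mat_norm:
  assumes uni: "unitary_mat n U" and v: "v \<in> carrier_vec n"
  shows "vec_norm_sq (U *\<^sub>v v) = vec_norm_sq v"
proof -
  have U: "U \<in> carrier_mat n n" using uni by (rule unitary_mat_carrier)
  have "complex_of_real (vec_norm_sq (U *\<^sub>v v)) = (\<Sum>k<n. (U *\<^sub>v v) $ k * cnj ((U *\<^sub>v v) $ k))"
    using U by (simp only: vec_norm_sq_def of_real_sum complex_norm_square) simp
  also have "\<dots> = (\<Sum>k<n. \<Sum>j<n. \<Sum>l<n. (U $$ (k,j) * v $ j) * cnj (U $$ (k,l) * v $ l))"
    by (intro sum.cong refl) (simp add: mult_mat_vec_index_sum[OF U v] cnj_sum sum_product)
  also have "\<dots> = (\<Sum>j<n. \<Sum>l<n. \<Sum>k<n. (U $$ (k,j) * v $ j) * cnj (U $$ (k,l) * v $ l))"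
    by (subst sum.swap, rule sum.cong[OF refl], rule sum.swap)
  also have "\<dots> = (\<Sum>j<n. \<Sum>l<n. v $ j * cnj (v $ l) * (\<Sum>k<n. cnj (U $$ (k,l)) * U $$ (k,j)))"
    by (intro sum.cong refl) (simp add: sum_distrib_left algebra_simps)
  also have "\<dots> = (\<Sum>j<n. v $ j * cnj (v $ j))"
    by (intro sum.cong refl)
       (simp add: unitary_mat_columns_orthonormal[OF uni] if_distrib[of "\<lambda>z. _ * z"] sum.delta cong: if_cong)
  also have "\<dots> = complex_of_real (vec_norm_sq v)"
    using v by (simp only: vec_norm_sq_def of_real_sum complex_norm_square) simp
  finally show ?thesis by (simp only: of_real_eq_iff)
qed

lemma run_carrier:
  assumes "\<forall>U \<in> set Us. U \<in> carrier_mat n n" "Q \<in> carrier_mat n n" "v \<in> carrier_vec n"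
  shows "run Us Q v \<in> carrier_vec n"
  using assms by (induction Us Q v rule: run.induct) auto

lemma run_norm:
  assumes "\<forall>U \<in> set Us. unitary_mat n U" "Q \<in> carrier_mat n n"
    and "\<And>u. u \<in> carrier_vec n \<Longrightarrow> vec_norm_sq (Q *\<^sub>v u) = vec_norm_sq u"
    and "v \<in> carrier_vec n"
  shows "vec_norm_sq (run Us Q v) = vec_norm_sq v"
  using assms
proof (induction Us Q v rule: run.induct)
  case (3 U V Us Q v)
  have U: "unitary_mat n U" and v: "v \<in> carrier_vec n" using "3.prems" by simp_all
  then have "U *\<^sub>v v \<in> carrier_vec n" using unitary_mat_carrier by (meson mult_mat_vec_carrier)
  with "3" show ?case by (simp add: unitary_mat_norm[OF U v])
qed (auto simp: unitary_mat_norm)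

definition bsign :: "bool \<Rightarrow> 'a :: ring_1" where
  "bsign b = (if b then -1 else 1)"

lemma bsign_simps [simp]:
  "bsign True = -1" "bsign False = 1" "of_real (bsign b) = bsign b" "cnj (bsign b) = bsign b"
  by (simp_all add: bsign_def)

lemma query_op_carrier: "query_op m W x \<in> carrier_mat (qdim m W) (qdim m W)"
  by (simp add: query_op_def)

lemma query_op_mult_index:
  "v \<in> carrier_vec (qdim m W) \<Longrightarrow> k < qdim m W \<Longrightarrow>
    (query_op m W x *\<^sub>v v) $ k = bsign (x (in_reg W k)) * v $ k"
  by (simp add: query_op_def scalar_prod_def bsign_def if_distrib[of "\<lambda>z. z * _"] cong: if_cong)

lemma query_op_norm:
  "v \<in> carrier_vec (qdim m W) \<Longrightarrow> vec_norm_sq (query_op m W x *\<^sub>v v) = vec_norm_sq v"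
  using query_op_carrier[of m W x]
  unfolding vec_norm_sq_def
  by (intro sum.cong) (auto simp del: index_mult_mat_vec simp: query_op_mult_index norm_mult bsign_def)

lemma final_state_carrier:
  "\<forall>U \<in> set Us. unitary_mat (qdim m W) U \<Longrightarrow> final_state m W Us x \<in> carrier_vec (qdim m W)"
  unfolding final_state_def
  by (rule run_carrier) (auto simp: unitary_mat_carrier query_op_carrier)

lemma final_state_norm:
  assumes "W \<ge> 1" "\<forall>U \<in> set Us. unitary_mat (qdim m W) U"
  shows "vec_norm_sq (final_state m W Us x) = 1"
proof -
  have "0 < qdim m W" using assms(1) by (simp add: qdim_def)
  then have "vec_norm_sq (unit_vec (qdim m W) 0) = 1"
    by (simp add: vec_norm_sq_def unit_vec_def if_distrib[of "\<lambda>z. (cmod z)\<^sup>2"] cong: if_cong)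
  then show ?thesis
    unfolding final_state_def
    by (subst run_norm[OF assms(2) query_op_carrier]) (simp_all add: query_op_norm)
qed

lemma prob_out_True_plus_False:
  assumes "\<forall>U \<in> set Us. unitary_mat (qdim m W) U"
  shows "prob_out m W Us x True + prob_out m W Us x False = vec_norm_sq (final_state m W Us x)"
proof -
  have "{k. k < qdim m W \<and> out_reg k = True} = {..<qdim m W} \<inter> Collect out_reg"
    and "{k. k < qdim m W \<and> out_reg k = False} = {..<qdim m W} - Collect out_reg" by auto
  then show ?thesis
    using final_state_carrier[OF assms, of x]
    unfolding prob_out_def vec_norm_sq_def
    by (simp add: sum.Int_Diff[of "{..<qdim m W}" _ "Collect out_reg", symmetric])
qed

lemma computes_exactly_accept_prob:
  assumes "computes_exactly m h t W Us" "x \<in> inputs m"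
  shows "prob_out m W Us x True = of_bool (h x)"
  using assms prob_out_True_plus_False[of Us m W x] final_state_norm[of W Us m x]
  unfolding computes_exactly_def by (cases "h x") auto

text \<open>The input bit x_0 = 0 supplies the constant term.\<close>
lemma one_query_amplitudes:
  assumes ce: "computes_exactly m h t W Us" and t: "t \<le> 1"
  shows "\<exists>g w. \<forall>x k. \<not> x 0 \<longrightarrow> k < qdim m W \<longrightarrow>
    final_state m W Us x $ k = (\<Sum>l<qdim m W. bsign (x (g l)) * w k l)"
proof -
  let ?D = "qdim m W"
  have W: "W \<ge> 1" and len: "length Us = t + 1" and uni: "\<forall>U \<in> set Us. unitary_mat ?D U"
    using ce unfolding computes_exactly_def by auto
  have D: "0 < ?D" using W by (simp add: qdim_def)
  consider U0 where "Us = [U0]" | U0 U1 where "Us = [U0, U1]"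
    using len t by (metis One_nat_def Suc_eq_plus1 le_Suc_eq le_zero_eq length_0_conv length_Suc_conv)
  then show ?thesis
  proof cases
    case 1
    define \<phi> where "\<phi> = U0 *\<^sub>v unit_vec ?D 0"
    have "final_state m W Us x = \<phi>" for x by (simp add: final_state_def 1 \<phi>_def)
    then have "final_state m W Us x $ k = (\<Sum>l<?D. bsign (x 0) * (if l = 0 then \<phi> $ k else 0))"
      if "\<not> x 0" for x k
      using D that by simp
    then show ?thesis by (intro exI[of _ "\<lambda>l. 0"] exI[of _ "\<lambda>k l. if l = 0 then \<phi> $ k else 0"]) simp
  next
    case 2
    define \<phi> where "\<phi> = U0 *\<^sub>v unit_vec ?D 0"
    have U1: "U1 \<in> carrier_mat ?D ?D" and \<phi>: "\<phi> \<in> carrier_vec ?D"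
      using uni 2 unfolding \<phi>_def by (auto dest!: unitary_mat_carrier)
    have "final_state m W Us x $ k = (\<Sum>l<?D. bsign (x (in_reg W l)) * (U1 $$ (k,l) * \<phi> $ l))"
      if k: "k < ?D" for x k
    proof -
      have fs: "final_state m W Us x = U1 *\<^sub>v (query_op m W x *\<^sub>v \<phi>)"
        by (simp add: final_state_def 2 \<phi>_def)
      have "final_state m W Us x $ k = (\<Sum>l<?D. U1 $$ (k,l) * (query_op m W x *\<^sub>v \<phi>) $ l)"
        unfolding fs by (rule mult_mat_vec_index_sum[OF U1 mult_mat_vec_carrier[OF query_op_carrier \<phi>] k])
      also have "\<dots> = (\<Sum>l<?D. bsign (x (in_reg W l)) * (U1 $$ (k,l) * \<phi> $ l))"
        by (intro sum.cong refl) (simp del: index_mult_mat_vec add: query_op_mult_index[OF \<phi>])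
      finally show ?thesis .
    qed
    then show ?thesis by (intro exI[of _ "in_reg W"] exI[of _ "\<lambda>k l. U1 $$ (k,l) * \<phi> $ l"]) simp
  qed
qed

section \<open>The polynomial method for three variables\<close>

definition input3 :: "bool \<Rightarrow> bool \<Rightarrow> bool \<Rightarrow> nat \<Rightarrow> bool" where
  "input3 a b c i = (i = 1 \<and> a \<or> i = 2 \<and> b \<or> i = 3 \<and> c)"

lemma input3_in_inputs: "input3 a b c \<in> inputs 3"
  unfolding input3_def inputs_def by auto

lemma inputs_3_eq_input3:
  assumes "x \<in> inputs 3"
  shows "x = input3 (x 1) (x 2) (x 3)"
proof
  fix i :: nat
  have "i \<in> {1..3} \<longleftrightarrow> i = 1 \<or> i = 2 \<or> i = 3" by auto
  then show "x i = input3 (x 1) (x 2) (x 3) i"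
    using assms unfolding inputs_def input3_def by auto
qed

lemma f_and_or_input3: "f_and_or (input3 a b c) = (a \<and> (b \<or> c))"
  by (simp add: f_and_or_def input3_def)

text \<open>Eight times the Fourier coefficient of F at the character (-1)^(a + b + c).\<close>
definition top_fourier_coeff :: "(bool \<Rightarrow> bool \<Rightarrow> bool \<Rightarrow> real) \<Rightarrow> real" where
  "top_fourier_coeff F = (\<Sum>a\<in>UNIV. \<Sum>b\<in>UNIV. \<Sum>c\<in>UNIV. bsign a * bsign b * bsign c * F a b c)"

lemma top_fourier_coeff_sum:
  "finite K \<Longrightarrow> top_fourier_coeff (\<lambda>a b c. \<Sum>k\<in>K. F k a b c) = (\<Sum>k\<in>K. top_fourier_coeff (F k))"
  by (simp add: top_fourier_coeff_def sum_distrib_left sum.swap[where B = K])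

lemma top_fourier_coeff_f_and_or: "top_fourier_coeff (\<lambda>a b c. of_bool (f_and_or (input3 a b c))) = 1"
  by (simp add: top_fourier_coeff_def f_and_or_input3 UNIV_bool)

lemma bsign_input3:
  "bsign (input3 a b c i) = (if i = 1 then bsign a else if i = 2 then bsign b else if i = 3 then bsign c else 1)"
  by (simp add: input3_def)

lemma bsign_input3_uncorrelated:
  "(\<Sum>a\<in>UNIV. \<Sum>b\<in>UNIV. \<Sum>c\<in>UNIV.
     bsign a * bsign b * bsign c * bsign (input3 a b c p) * bsign (input3 a b c q) :: complex) = 0"
  unfolding bsign_input3
  by (cases "p = 1"; cases "p = 2"; cases "p = 3"; cases "q = 1"; cases "q = 2"; cases "q = 3")
     (simp_all add: UNIV_bool)

lemma top_fourier_coeff_square_affine: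
  fixes w :: "nat \<Rightarrow> complex"
  assumes "finite L"
  shows "top_fourier_coeff (\<lambda>a b c. (cmod (\<Sum>l\<in>L. bsign (input3 a b c (g l)) * w l))\<^sup>2) = 0"
proof -
  let ?\<chi> = "\<lambda>a b c. bsign a * bsign b * bsign c :: complex"
  let ?s = "\<lambda>a b c l. bsign (input3 a b c (g l)) :: complex"
  have "complex_of_real (top_fourier_coeff (\<lambda>a b c. (cmod (\<Sum>l\<in>L. ?s a b c l * w l))\<^sup>2))
     = (\<Sum>a\<in>UNIV. \<Sum>b\<in>UNIV. \<Sum>c\<in>UNIV. ?\<chi> a b c *
         ((\<Sum>l\<in>L. ?s a b c l * w l) * cnj (\<Sum>l\<in>L. ?s a b c l * w l)))"
    by (simp only: top_fourier_coeff_def of_real_sum of_real_mult bsign_simps complex_norm_square)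
  also have "\<dots> = (\<Sum>l\<in>L. \<Sum>m\<in>L. (\<Sum>a\<in>UNIV. \<Sum>b\<in>UNIV. \<Sum>c\<in>UNIV.
                    ?\<chi> a b c * ?s a b c m * ?s a b c l) * (w m * cnj (w l)))"
    by (simp add: cnj_sum sum_product sum_distrib_left sum_distrib_right
        sum.swap[where A = UNIV and B = L] algebra_simps)
  also have "\<dots> = 0" by (simp add: bsign_input3_uncorrelated)
  finally show ?thesis by (simp only: of_real_eq_0_iff)
qed

lemma computes_exactly_f_and_or_queries:
  assumes ce: "computes_exactly 3 f_and_or t W Us"
  shows "t \<ge> 2"
proof (rule ccontr)
  assume "\<not> t \<ge> 2"
  then have "t \<le> 1" by simp
  then obtain g w where amp: "\<forall>x k. \<not> x 0 \<longrightarrow> k < qdim 3 W \<longrightarrow>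
      final_state 3 W Us x $ k = (\<Sum>l<qdim 3 W. bsign (x (g l)) * w k l)"
    using one_query_amplitudes[OF ce] by blast
  let ?K = "{k. k < qdim 3 W \<and> out_reg k}"
  have "of_bool (f_and_or (input3 a b c))
      = (\<Sum>k\<in>?K. (cmod (\<Sum>l<qdim 3 W. bsign (input3 a b c (g l)) * w k l))\<^sup>2)" for a b c
    using computes_exactly_accept_prob[OF ce input3_in_inputs, of a b c]
    by (simp add: prob_out_def amp input3_def)
  then have "1 = top_fourier_coeff
      (\<lambda>a b c. \<Sum>k\<in>?K. (cmod (\<Sum>l<qdim 3 W. bsign (input3 a b c (g l)) * w k l))\<^sup>2)"
    using top_fourier_coeff_f_and_or by simp
  also have "\<dots> = 0"
    by (simp add: top_fourier_coeff_sum top_fourier_coeff_square_affine)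
  finally show False by simp
qed

section \<open>Parity decision trees\<close>

definition parity :: "nat set \<Rightarrow> (nat \<Rightarrow> bool) \<Rightarrow> bool" where
  "parity S x = odd (card {i \<in> S. x i})"

lemma parity_empty [simp]: "parity {} x = False"
  by (simp add: parity_def)

lemma pdt_eval_Node_parity:
  "pdt_eval (Node S l r) x = (if parity S x then pdt_eval r x else pdt_eval l x)"
  by (simp add: parity_def)

lemma pdt_depth_le_1:
  assumes "pdt_depth T \<le> 1"
  shows "\<exists>c S. \<forall>x. pdt_eval T x = (c \<noteq> parity S x)"
proof (cases T)
  case (Leaf b)
  then have "\<forall>x. pdt_eval T x = (b \<noteq> parity {} x)" by simp
  then show ?thesis by blast
next
  case (Node S l r)
  with assms obtain bl br where "l = Leaf bl" "r = Leaf br"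
    by (cases l; cases r) auto
  then have "\<forall>x. pdt_eval T x = (bl \<noteq> parity (if bl = br then {} else S) x)"
    using Node by (auto simp del: pdt_eval.simps(2) simp: pdt_eval_Node_parity)
  then show ?thesis by blast
qed

lemma pdt_depth_le_2:
  assumes "pdt_depth T \<le> 2"
  shows "\<exists>S c\<^sub>0 S\<^sub>0 c\<^sub>1 S\<^sub>1. \<forall>x. pdt_eval T x =
    (if parity S x then c\<^sub>1 \<noteq> parity S\<^sub>1 x else c\<^sub>0 \<noteq> parity S\<^sub>0 x)"
proof (cases T)
  case (Leaf b)
  then have "\<forall>x. pdt_eval T x = (if parity {} x then b \<noteq> parity {} x else b \<noteq> parity {} x)"
    by simp
  then show ?thesis by blast
next
  case (Node S l r)
  with assms obtain c\<^sub>0 S\<^sub>0 c\<^sub>1 S\<^sub>1 where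
    "\<forall>x. pdt_eval l x = (c\<^sub>0 \<noteq> parity S\<^sub>0 x)" "\<forall>x. pdt_eval r x = (c\<^sub>1 \<noteq> parity S\<^sub>1 x)"
    using pdt_depth_le_1[of l] pdt_depth_le_1[of r] by auto
  then have "\<forall>x. pdt_eval T x = (if parity S x then c\<^sub>1 \<noteq> parity S\<^sub>1 x else c\<^sub>0 \<noteq> parity S\<^sub>0 x)"
    using Node by (simp del: pdt_eval.simps(2) add: pdt_eval_Node_parity)
  then show ?thesis by blast
qed

lemma parity_input3:
  "parity S (input3 a b c) = ((1 \<in> S \<and> a) \<noteq> ((2 \<in> S \<and> b) \<noteq> (3 \<in> S \<and> c)))"
proof -
  have set_eq: "{i \<in> S. input3 a b c i} =
      (if 1 \<in> S \<and> a then {1} else {}) \<union> (if 2 \<in> S \<and> b then {2} else {}) \<union> (if 3 \<in> S \<and> c then {3} else {})"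
    by (auto simp: input3_def)
  show ?thesis
    unfolding parity_def set_eq
    by (cases "1 \<in> S"; cases a; cases "2 \<in> S"; cases b; cases "3 \<in> S"; cases c) auto
qed

lemma pdt_computes_f_and_or_depth:
  assumes "pdt_computes 3 f_and_or T"
  shows "pdt_depth T \<ge> 3"
proof (rule ccontr)
  assume "\<not> pdt_depth T \<ge> 3"
  then have "pdt_depth T \<le> 2" by simp
  then obtain S c\<^sub>0 S\<^sub>0 c\<^sub>1 S\<^sub>1 where T: "\<forall>x. pdt_eval T x =
      (if parity S x then c\<^sub>1 \<noteq> parity S\<^sub>1 x else c\<^sub>0 \<noteq> parity S\<^sub>0 x)"
    using pdt_depth_le_2 by blast
  have "(if parity S (input3 a b c) then c\<^sub>1 \<noteq> parity S\<^sub>1 (input3 a b c)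
         else c\<^sub>0 \<noteq> parity S\<^sub>0 (input3 a b c)) = (a \<and> (b \<or> c))" for a b c
    using assms input3_in_inputs T unfolding pdt_computes_def by (metis f_and_or_input3)
  note tree_values = this[unfolded parity_input3]
  show False
    using tree_values[of False False False] tree_values[of False False True] tree_values[of False True False]
      tree_values[of False True True] tree_values[of True False False] tree_values[of True False True]
      tree_values[of True True False] tree_values[of True True True]
    by (cases "1 \<in> S"; cases "2 \<in> S"; cases "3 \<in> S"; cases c\<^sub>0; cases c\<^sub>1) auto
qed

section \<open>An exact two-query algorithm\<close>

definition two_level_entry :: "nat \<Rightarrow> nat \<Rightarrow> real \<Rightarrow> real \<Rightarrow> real \<Rightarrow> real \<Rightarrow> nat \<Rightarrow> nat \<Rightarrow> real" where
  "two_level_entry p q a b c d i j =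
    (if i = p then (if j = p then a else if j = q then b else 0)
     else if i = q then (if j = p then c else if j = q then d else 0)
     else if i = j then 1 else 0)"

definition two_level :: "nat \<Rightarrow> nat \<Rightarrow> nat \<Rightarrow> real \<Rightarrow> real \<Rightarrow> real \<Rightarrow> real \<Rightarrow> complex mat" where
  "two_level n p q a b c d = mat n n (\<lambda>(i, j). complex_of_real (two_level_entry p q a b c d i j))"

lemma sum_two_level_entry:
  assumes "p < n" "q < n" "p \<noteq> q" "i < n"
  shows "(\<Sum>j = 0..<n. two_level_entry p q a b c d i j * f j) =
    (if i = p then a * f p + b * f q else if i = q then c * f p + d * f q else f i)"
proof -
  have "two_level_entry p q a b c d i j * f j =
     (if j = p then (if i = p then a * f p else if i = q then c * f p else 0) else 0)
   + (if j = q then (if i = p then b * f q else if i = q then d * f q else 0) else 0)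
   + (if j = i then (if i = p \<or> i = q then 0 else f i) else 0)" for j
    using assms(3) unfolding two_level_entry_def by auto
  then show ?thesis using assms by (simp add: sum.distrib sum.delta)
qed

lemma two_level_carrier: "two_level n p q a b c d \<in> carrier_mat n n"
  by (simp add: two_level_def)

lemma two_level_unitary:
  assumes "p < n" "q < n" "p \<noteq> q" "a * a + b * b = 1" "c * c + d * d = 1" "a * c + b * d = 0"
  shows "unitary_mat n (two_level n p q a b c d)"
  unfolding unitary_mat_def
proof (intro conjI two_level_carrier eq_matI)
  let ?G = "two_level n p q a b c d"
  let ?e = "two_level_entry p q a b c d"
  have G: "?G \<in> carrier_mat n n" by (rule two_level_carrier)
  fix i j assume "i < dim_row (1\<^sub>m n :: complex mat)" "j < dim_col (1\<^sub>m n :: complex mat)"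
  then have i: "i < n" and j: "j < n" by auto
  have "(?G * mat_adjoint ?G) $$ (i, j) = (\<Sum>l = 0..<n. ?G $$ (i, l) * mat_adjoint ?G $$ (l, j))"
    using i j G mat_adjoint_carrier[OF G] by (simp add: scalar_prod_def)
  also have "\<dots> = (\<Sum>l = 0..<n. complex_of_real (?e i l * ?e j l))"
    using i j by (intro sum.cong refl) (subst mat_adjoint_index[OF G], auto simp: two_level_def)
  also have "\<dots> = complex_of_real (\<Sum>l = 0..<n. ?e i l * ?e j l)"
    by simp
  also have "(\<Sum>l = 0..<n. ?e i l * ?e j l) = (if i = j then 1 else 0)"
    using sum_two_level_entry[OF assms(1-3) i, of a b c d "?e j"] assms
    by (cases "i = p"; cases "i = q"; cases "j = p"; cases "j = q")
       (simp_all add: two_level_entry_def algebra_simps)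
  finally show "(?G * mat_adjoint ?G) $$ (i, j) = 1\<^sub>m n $$ (i, j)" using i j by simp
qed (use mat_adjoint_carrier[OF two_level_carrier[of n p q a b c d]] in \<open>auto simp: two_level_def\<close>)

definition cvec :: "real list \<Rightarrow> complex vec" where
  "cvec xs = vec (length xs) (\<lambda>i. complex_of_real (xs ! i))"

definition two_level_list :: "nat \<Rightarrow> nat \<Rightarrow> real \<Rightarrow> real \<Rightarrow> real \<Rightarrow> real \<Rightarrow> real list \<Rightarrow> real list" where
  "two_level_list p q a b c d xs = map (\<lambda>i.
     if i = p then a * xs ! p + b * xs ! q else if i = q then c * xs ! p + d * xs ! q else xs ! i)
     [0..<length xs]"

definition phase_list :: "nat \<Rightarrow> (nat \<Rightarrow> bool) \<Rightarrow> real list \<Rightarrow> real list" where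
  "phase_list W x xs = map (\<lambda>k. bsign (x (in_reg W k)) * xs ! k) [0..<length xs]"

lemma length_two_level_list [simp]: "length (two_level_list p q a b c d xs) = length xs"
  by (simp add: two_level_list_def)

lemma length_phase_list [simp]: "length (phase_list W x xs) = length xs"
  by (simp add: phase_list_def)

lemma cvec_carrier: "length xs = n \<Longrightarrow> cvec xs \<in> carrier_vec n"
  by (simp add: cvec_def)

lemma two_level_mult_cvec:
  assumes "length xs = n" "p < n" "q < n" "p \<noteq> q"
  shows "two_level n p q a b c d *\<^sub>v cvec xs = cvec (two_level_list p q a b c d xs)"
proof (rule eq_vecI)
  fix i assume "i < dim_vec (cvec (two_level_list p q a b c d xs))"
  then have i: "i < n" using assms(1) by (simp add: cvec_def)
  have "(two_level n p q a b c d *\<^sub>v cvec xs) $ i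
      = complex_of_real (\<Sum>j = 0..<n. two_level_entry p q a b c d i j * xs ! j)"
    using i assms(1) by (simp add: two_level_def cvec_def scalar_prod_def)
  then show "(two_level n p q a b c d *\<^sub>v cvec xs) $ i = cvec (two_level_list p q a b c d xs) $ i"
    using i assms by (simp add: sum_two_level_entry cvec_def two_level_list_def)
qed (simp add: two_level_def cvec_def assms(1))

lemma query_op_mult_cvec:
  assumes "length xs = qdim m W"
  shows "query_op m W x *\<^sub>v cvec xs = cvec (phase_list W x xs)"
proof (rule eq_vecI)
  fix k assume "k < dim_vec (cvec (phase_list W x xs))"
  then have k: "k < qdim m W" using assms by (simp add: cvec_def)
  then show "(query_op m W x *\<^sub>v cvec xs) $ k = cvec (phase_list W x xs) $ k"
    using query_op_mult_index[OF cvec_carrier[OF assms] k] assms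
    by (simp del: index_mult_mat_vec add: cvec_def phase_list_def)
qed (simp add: query_op_def cvec_def assms)

lemma two_level_mult_assoc:
  "B \<in> carrier_mat n n \<Longrightarrow> length xs = n \<Longrightarrow>
    (two_level n p q a b c d * B) *\<^sub>v cvec xs = two_level n p q a b c d *\<^sub>v (B *\<^sub>v cvec xs)"
  by (metis assoc_mult_mat_vec two_level_carrier cvec_carrier)

lemma two_level_mult_carrier: "B \<in> carrier_mat n n \<Longrightarrow> two_level n p q a b c d * B \<in> carrier_mat n n"
  using two_level_carrier by (metis mult_carrier_mat)

definition inv_sqrt2 :: real where
  "inv_sqrt2 = sqrt 2 / 2"

abbreviation hadamard :: "nat \<Rightarrow> nat \<Rightarrow> complex mat" where
  "hadamard p q \<equiv> two_level 8 p q inv_sqrt2 inv_sqrt2 inv_sqrt2 (- inv_sqrt2)"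

text \<open>The workspace is one-dimensional, so the basis vector |i>|b> has index 2 i + b.\<close>
definition alg_U0 :: "complex mat" where
  "alg_U0 = hadamard 4 6 * two_level 8 0 4 inv_sqrt2 (- inv_sqrt2) inv_sqrt2 inv_sqrt2"

definition alg_U1 :: "complex mat" where
  "alg_U1 = hadamard 4 6 * (two_level 8 1 3 (1/2) (- (sqrt 3 / 2)) (sqrt 3 / 2) (1/2) *
     (two_level 8 1 6 0 1 1 0 * (two_level 8 0 2 (- inv_sqrt2) inv_sqrt2 (- inv_sqrt2) (- inv_sqrt2) *
     (two_level 8 0 4 inv_sqrt2 (- inv_sqrt2) inv_sqrt2 inv_sqrt2 * hadamard 4 6))))"

definition alg_U2 :: "complex mat" where
  "alg_U2 = two_level 8 1 2 0 1 1 0 * (hadamard 1 3 * (hadamard 0 2 *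
     (two_level 8 1 6 (sqrt 3 / 3) (sqrt 6 / 3) (- (sqrt 6 / 3)) (sqrt 3 / 3) * hadamard 4 6)))"

lemma inv_sqrt2_sq: "inv_sqrt2 * inv_sqrt2 = 1/2"
  by (simp add: inv_sqrt2_def field_simps)

lemma inv_sqrt2_sq_mult: "inv_sqrt2 * (inv_sqrt2 * x) = x / 2"
  by (simp add: mult.assoc[symmetric] inv_sqrt2_sq)

lemma sqrt6_sq: "sqrt 2 * sqrt 3 * (sqrt 2 * sqrt 3) = 6"
  by (metis real_sqrt_mult real_sqrt_mult_self abs_of_nonneg zero_le_numeral
      mult_2 numeral_Bit0 numeral_times_numeral num_double)

lemma alg_unitary: "unitary_mat 8 alg_U0" "unitary_mat 8 alg_U1" "unitary_mat 8 alg_U2"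
  unfolding alg_U0_def alg_U1_def alg_U2_def
  by (intro unitary_mat_mult two_level_unitary;
      simp add: inv_sqrt2_sq power_divide real_sqrt_mult[symmetric] sqrt6_sq)+

lemma alg_U0_mult_cvec:
  "length xs = 8 \<Longrightarrow> alg_U0 *\<^sub>v cvec xs =
    cvec (two_level_list 4 6 inv_sqrt2 inv_sqrt2 inv_sqrt2 (- inv_sqrt2)
      (two_level_list 0 4 inv_sqrt2 (- inv_sqrt2) inv_sqrt2 inv_sqrt2 xs))"
  unfolding alg_U0_def
  by (simp add: two_level_mult_assoc two_level_carrier two_level_mult_carrier two_level_mult_cvec)

lemma alg_U1_mult_cvec:
  "length xs = 8 \<Longrightarrow> alg_U1 *\<^sub>v cvec xs =
    cvec (two_level_list 4 6 inv_sqrt2 inv_sqrt2 inv_sqrt2 (- inv_sqrt2)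
      (two_level_list 1 3 (1/2) (- (sqrt 3 / 2)) (sqrt 3 / 2) (1/2)
      (two_level_list 1 6 0 1 1 0
      (two_level_list 0 2 (- inv_sqrt2) inv_sqrt2 (- inv_sqrt2) (- inv_sqrt2)
      (two_level_list 0 4 inv_sqrt2 (- inv_sqrt2) inv_sqrt2 inv_sqrt2
      (two_level_list 4 6 inv_sqrt2 inv_sqrt2 inv_sqrt2 (- inv_sqrt2) xs))))))"
  unfolding alg_U1_def
  by (simp add: two_level_mult_assoc two_level_carrier two_level_mult_carrier two_level_mult_cvec)

lemma alg_U2_mult_cvec:
  "length xs = 8 \<Longrightarrow> alg_U2 *\<^sub>v cvec xs =
    cvec (two_level_list 1 2 0 1 1 0
      (two_level_list 1 3 inv_sqrt2 inv_sqrt2 inv_sqrt2 (- inv_sqrt2)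
      (two_level_list 0 2 inv_sqrt2 inv_sqrt2 inv_sqrt2 (- inv_sqrt2)
      (two_level_list 1 6 (sqrt 3 / 3) (sqrt 6 / 3) (- (sqrt 6 / 3)) (sqrt 3 / 3)
      (two_level_list 4 6 inv_sqrt2 inv_sqrt2 inv_sqrt2 (- inv_sqrt2) xs)))))"
  unfolding alg_U2_def
  by (simp add: two_level_mult_assoc two_level_carrier two_level_mult_carrier two_level_mult_cvec)

definition alg_amplitudes :: "(nat \<Rightarrow> bool) \<Rightarrow> real list" where
  "alg_amplitudes x =
    two_level_list 1 2 0 1 1 0
      (two_level_list 1 3 inv_sqrt2 inv_sqrt2 inv_sqrt2 (- inv_sqrt2)
      (two_level_list 0 2 inv_sqrt2 inv_sqrt2 inv_sqrt2 (- inv_sqrt2)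
      (two_level_list 1 6 (sqrt 3 / 3) (sqrt 6 / 3) (- (sqrt 6 / 3)) (sqrt 3 / 3)
      (two_level_list 4 6 inv_sqrt2 inv_sqrt2 inv_sqrt2 (- inv_sqrt2)
    (phase_list 1 x
      (two_level_list 4 6 inv_sqrt2 inv_sqrt2 inv_sqrt2 (- inv_sqrt2)
      (two_level_list 1 3 (1/2) (- (sqrt 3 / 2)) (sqrt 3 / 2) (1/2)
      (two_level_list 1 6 0 1 1 0
      (two_level_list 0 2 (- inv_sqrt2) inv_sqrt2 (- inv_sqrt2) (- inv_sqrt2)
      (two_level_list 0 4 inv_sqrt2 (- inv_sqrt2) inv_sqrt2 inv_sqrt2
      (two_level_list 4 6 inv_sqrt2 inv_sqrt2 inv_sqrt2 (- inv_sqrt2)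
    (phase_list 1 x
      (two_level_list 4 6 inv_sqrt2 inv_sqrt2 inv_sqrt2 (- inv_sqrt2)
      (two_level_list 0 4 inv_sqrt2 (- inv_sqrt2) inv_sqrt2 inv_sqrt2
    [1, 0, 0, 0, 0, 0, 0, 0]))))))))))))))"

lemma final_state_alg: "final_state 3 1 [alg_U0, alg_U1, alg_U2] x = cvec (alg_amplitudes x)"
proof -
  have "unit_vec 8 0 = cvec [1, 0, 0, 0, 0, 0, 0, 0]"
    unfolding cvec_def unit_vec_def by (rule eq_vecI) (auto simp: nth_Cons')
  moreover have "qdim 3 1 = 8" by (simp add: qdim_def)
  ultimately show ?thesis
    unfolding final_state_def alg_amplitudes_def
    by (simp add: alg_U0_mult_cvec alg_U1_mult_cvec alg_U2_mult_cvec query_op_mult_cvec)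
qed

lemma prob_out_alg:
  "prob_out 3 1 [alg_U0, alg_U1, alg_U2] x b =
    (\<Sum>k \<in> (if b then {1, 3, 5, 7} else {0, 2, 4, 6}). (alg_amplitudes x ! k)\<^sup>2)"
proof -
  have less8: "k < 8 \<Longrightarrow> k = 0 \<or> k = 1 \<or> k = 2 \<or> k = 3 \<or> k = 4 \<or> k = 5 \<or> k = 6 \<or> k = 7"
    for k :: nat by auto
  have out: "{k. k < qdim 3 1 \<and> out_reg k = b} = (if b then {1, 3, 5, 7} else {0, 2, 4, 6})"
    unfolding qdim_def out_reg_def by (auto dest!: less8)
  have "length (alg_amplitudes x) = 8" by (simp add: alg_amplitudes_def)
  then have "(cmod (cvec (alg_amplitudes x) $ k))\<^sup>2 = (alg_amplitudes x ! k)\<^sup>2" if "k < 8" for k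
    using that by (simp add: cvec_def)
  moreover have "k < 8" if "k \<in> (if b then {1, 3, 5, 7} else {0, 2, 4, 6})" for k :: nat
    using that by (auto split: if_splits)
  ultimately show ?thesis
    unfolding prob_out_def out final_state_alg by (intro sum.cong) auto
qed

lemma alg_accepts: "prob_out 3 1 [alg_U0, alg_U1, alg_U2] (input3 a b c) (a \<and> (b \<or> c)) = 1"
proof -
  have "sqrt 6 = sqrt 2 * sqrt 3" by (simp add: real_sqrt_mult[symmetric])
  then have sqrt6: "inv_sqrt2 * sqrt 6 = sqrt 3" by (simp add: inv_sqrt2_def)
  have in_reg_1: "in_reg (Suc 0) k = k div 2" for k by (simp add: in_reg_def)
  have upt8: "[0..<8] = [0, 1, 2, 3, 4, 5, 6, 7 :: nat]" by (simp add: upt_rec)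
  show ?thesis
    unfolding prob_out_alg
    by (cases a; cases b; cases c;
        simp add: alg_amplitudes_def two_level_list_def phase_list_def in_reg_1 upt8 input3_def
          inv_sqrt2_sq inv_sqrt2_sq_mult sqrt6;
        simp add: power2_eq_square algebra_simps inv_sqrt2_sq inv_sqrt2_sq_mult sqrt6)
qed

lemma computes_exactly_alg: "computes_exactly 3 f_and_or 2 1 [alg_U0, alg_U1, alg_U2]"
  unfolding computes_exactly_def
proof (intro conjI ballI)
  fix x assume "x \<in> inputs 3"
  then have "input3 (x 1) (x 2) (x 3) = x" by (rule inputs_3_eq_input3[symmetric])
  then show "prob_out 3 1 [alg_U0, alg_U1, alg_U2] x (f_and_or x) = 1"
    using alg_accepts[of "x 1" "x 2" "x 3"] by (simp add: f_and_or_def)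
qed (use alg_unitary in \<open>auto simp: qdim_def\<close>)

theorem mainTheorem6:
  shows "QE 3 f_and_or = 2 \<and> (\<forall>T. pdt_computes 3 f_and_or T \<longrightarrow> pdt_depth T \<ge> 3)"
proof
  show "QE 3 f_and_or = 2"
    unfolding QE_def
  proof (rule Least_equality)
    show "\<exists>W Us. computes_exactly 3 f_and_or 2 W Us"
      using computes_exactly_alg by blast
  qed (use computes_exactly_f_and_or_queries in blast)
  show "\<forall>T. pdt_computes 3 f_and_or T \<longrightarrow> pdt_depth T \<ge> 3"
    using pdt_computes_f_and_or_depth by blast
qed

end
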